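(* Let $V$ be a Hermitian positive definite $m\times m$ matrix such that $\hat L^\dagger(\mathbf{k})V\hat L(\mathbf{k})$ is nonsingular for every nonzero $\mathbf{k}\in\mathbb{R}^d$, set $\Gamma(\mathbf{k})=\hat L(\mathbf{k})\big(\hat L^\dagger(\mathbf{k})V\hat L(\mathbf{k})\big)^{-1}\hat L^\dagger(\mathbf{k})$ and $\Delta(\mathbf{k})=V-V\Gamma(\mathbf{k})V$. Let $\mathbf{v}\in\mathbb{C}^m$ and suppose $\alpha=\sup_{\mathbf{k}\in\mathbb{R}^d,\mathbf{k}\neq 0}\mathbf{v}\cdot\Gamma(\mathbf{k})\mathbf{v}$ is finite and positive. Let $S=V-\mathbf{v}\mathbf{v}^\dagger/\alpha$ and $f(\mathbf{E})=\mathbf{E}\cdot S\mathbf{E}$. Let $\mathbf{k}\neq 0$ be such that $\mathbf{v}\cdot\Gamma(\mathbf{k})\mathbf{v}=\alpha$. Then the set of $\mathbf{G}\in\mathbb{C}^\ell$ with $f(\hat L(\mathbf{k})\mathbf{G})=0$ consists exactly of the vectors $\mathbf{G}=a\big(\hat L^\dagger(\mathbf{k})V\hat L(\mathbf{k})\big)^{-1}\hat L^\dagger(\mathbf{k})\mathbf{v}$ with $a\in\mathbb{C}$; for such $\mathbf{G}$, $\mathbf{H}=\hat L(\mathbf{k})\mathbf{G}=a\Gamma(\mathbf{k})\mathbf{v}$ satisfies $S\mathbf{H}=-a\Delta(\mathbf{k})V^{-1}\mathbf{v}$, and $\hat L^\dagger(\mathbf{k})\Delta(\mathbf{k})=0$,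 so that $S\mathbf{H}$ lies in the null space of $\hat L^\dagger(\mathbf{k})$.
   Context: Fix integers $d,\ell,m,t\ge 1$ and complex constants $A_{rq}$, $A^{a_1\ldots a_h}_{rqh}$ ($1\le r\le m$, $1\le q\le \ell$, $1\le h\le t$, $1\le a_i\le d$). For $\mathbf{k}\in\mathbb{R}^d$, $\hat L(\mathbf{k})$ is the $m\times\ell$ matrix with entries $A_{rq}+\sum_{h=1}^t\sum_{a_1,\ldots,a_h=1}^d i^hA^{a_1\ldots a_h}_{rqh}k_{a_1}\cdots k_{a_h}$ (the symbol of the differential operator $L_{rq}=A_{rq}+\sum_h\sum A^{a_1\ldots a_h}_{rqh}\partial_{x_{a_1}}\cdots\partial_{x_{a_h}}$), and $\hat L^\dagger(\mathbf{k})$ is its conjugate transpose; $\mathbf{v}^\dagger$ is the conjugate transpose of $\mathbf{v}$. For $\mathbf{a},\mathbf{b}\in\mathbb{C}^m$, $\mathbf{a}\cdot\mathbf{b}=\sum_r\overline{a_r}b_r$. *)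

theory Defs
  imports "HOL-Analysis.Analysis"
begin

text \<open>Dimensions d, l (ell), m are encoded by finite index types 'd, 'l, 'm.
  Complex m x l matrices are complex^'l^'m (rows indexed by 'm).\<close>

definition ctrans :: "complex^'c^'r \<Rightarrow> complex^'r^'c" where
  "ctrans M = (\<chi> i j. cnj (M $ j $ i))"

definition cdot :: "complex^'n \<Rightarrow> complex^'n \<Rightarrow> complex" where
  "cdot a b = (\<Sum>r\<in>UNIV. cnj (a $ r) * b $ r)"

definition herm_posdef :: "complex^'n^'n \<Rightarrow> bool" where
  "herm_posdef V \<longleftrightarrow> ctrans V = V \<and>
     (\<forall>x. x \<noteq> 0 \<longrightarrow> 0 < Re (cdot x (V *v x)))"

text \<open>The symbol L-hat(k) of the differential operator with coefficients
  A0 r q = A_{rq} and Ah r q h as = A^{a_1...a_h}_{rqh} (as = [a_1,...,a_h]).\<close>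
definition symbol ::
  "('m \<Rightarrow> 'l \<Rightarrow> complex) \<Rightarrow> ('m \<Rightarrow> 'l \<Rightarrow> nat \<Rightarrow> 'd list \<Rightarrow> complex) \<Rightarrow> nat
     \<Rightarrow> real^'d \<Rightarrow> complex^'l^'m" where
  "symbol A0 Ah t k = (\<chi> r q. A0 r q +
      (\<Sum>h\<in>{1..t}. \<Sum>as\<in>{as::('d::finite) list. length as = h}.
          \<i> ^ h * Ah r q h as * (\<Prod>a\<leftarrow>as. complex_of_real (k $ a))))"

definition Gam :: "complex^'l^'m \<Rightarrow> complex^'m^'m \<Rightarrow> complex^'m^'m" where
  "Gam L V = L ** matrix_inv (ctrans L ** V ** L) ** ctrans L"

definition Del :: "complex^'l^'m \<Rightarrow> complex^'m^'m \<Rightarrow> complex^'m^'m" where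
  "Del L V = V - V ** Gam L V ** V"

end

theory Submission imports Defs begin

text \<open>Write \<open>M = L\<^sup>\<dagger>VL\<close> and \<open>u = M\<^sup>-\<^sup>1L\<^sup>\<dagger>v\<close> (\<open>Gam_coeff\<close>), so that \<open>\<Gamma>v = Lu\<close> and \<open>\<alpha> = u\<cdot>Mu\<close>.
  On the range of \<open>L\<close> the form is \<open>f(LG) = G\<cdot>MG - |u\<cdot>MG|\<^sup>2/\<alpha>\<close>, and completing the
  square in the inner product given by \<open>M\<close> rewrites this as \<open>(G - cu)\<cdot>M(G - cu)\<close> with
  \<open>c = u\<cdot>MG/\<alpha>\<close>. As \<open>M\<close> is positive definite, \<open>f(LG)\<close> vanishes exactly on the multiples
  of \<open>u\<close>. The other claims are direct computations: \<open>S\<Gamma>v = V\<Gamma>v - v = -\<Delta>V\<^sup>-\<^sup>1v\<close> and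
  \<open>L\<^sup>\<dagger>\<Delta> = L\<^sup>\<dagger>V - MM\<^sup>-\<^sup>1L\<^sup>\<dagger>V = 0\<close>.
  Only \<open>v\<cdot>\<Gamma>(k)v = \<alpha> \<noteq> 0\<close> is needed.\<close>

lemma matrix_mult_matrix_inv:
  fixes A :: "'a::semiring_1^'n^'m"
  assumes "invertible A" shows "A ** matrix_inv A = mat 1"
  using someI_ex[of "\<lambda>A'. A ** A' = mat 1 \<and> A' ** A = mat 1"] assms
  by (simp add: invertible_def matrix_inv_def)

lemma matrix_inv_mult_matrix:
  fixes A :: "'a::semiring_1^'n^'m"
  assumes "invertible A" shows "matrix_inv A ** A = mat 1"
  using someI_ex[of "\<lambda>A'. A ** A' = mat 1 \<and> A' ** A = mat 1"] assms
  by (simp add: invertible_def matrix_inv_def)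

lemma matrix_vector_mult_matrix_inv:
  fixes A :: "'a::semiring_1^'n^'m"
  assumes "invertible A" shows "A *v (matrix_inv A *v x) = x"
  by (simp add: matrix_vector_mul_assoc matrix_mult_matrix_inv[OF assms])

lemma matrix_inv_matrix_vector_mult:
  fixes A :: "'a::semiring_1^'n^'m"
  assumes "invertible A" shows "matrix_inv A *v (A *v x) = x"
  by (simp add: matrix_vector_mul_assoc matrix_inv_mult_matrix[OF assms])


lemma ctrans_ctrans [simp]: "ctrans (ctrans A) = A"
  by (simp add: ctrans_def vec_eq_iff)

lemma ctrans_matrix_mult: "ctrans (A ** B) = ctrans B ** ctrans A"
  unfolding ctrans_def matrix_matrix_mult_def
  by (simp add: vec_eq_iff cnj_sum mult.commute)

lemma cdot_matrix_vector_mult: "cdot x (A *v y) = cdot (ctrans A *v x) y"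
  unfolding cdot_def ctrans_def matrix_vector_mult_def
  by (simp add: sum_distrib_left sum_distrib_right cnj_sum mult_ac, rule sum.swap)

lemma cdot_commute: "cdot y x = cnj (cdot x y)"
  by (simp add: cdot_def cnj_sum mult.commute)

lemma cdot_zero [simp]: "cdot x 0 = 0" "cdot 0 x = 0"
  by (simp_all add: cdot_def)

lemma cdot_diff_right: "cdot x (y - z) = cdot x y - cdot x z"
  by (simp add: cdot_def right_diff_distrib sum_subtractf)

lemma cdot_diff_left: "cdot (x - y) z = cdot x z - cdot y z"
  by (simp add: cdot_def left_diff_distrib sum_subtractf)

lemma cdot_smult_right: "cdot x (c *s y) = c * cdot x y"
  by (simp add: cdot_def sum_distrib_left mult_ac)

lemma cdot_smult_left: "cdot (c *s x) y = cnj c * cdot x y"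
  by (simp add: cdot_def sum_distrib_left mult_ac)

lemma cdot_hermitian_commute:
  assumes "ctrans M = M" shows "cdot x (M *v y) = cnj (cdot y (M *v x))"
  by (metis assms cdot_commute cdot_matrix_vector_mult)

lemma hermitian_completing_square:
  fixes M :: "complex^'n^'n" and u G :: "complex^'n"
  assumes herm: "ctrans M = M" and u: "cdot u (M *v u) = of_real \<alpha>" and "\<alpha> \<noteq> 0"
  defines "c \<equiv> cdot u (M *v G) / of_real \<alpha>"
  shows "cdot (G - c *s u) (M *v (G - c *s u))
           = cdot G (M *v G) - cdot u (M *v G) * cnj (cdot u (M *v G)) / of_real \<alpha>"
proof -
  have "cdot (G - c *s u) (M *v (G - c *s u))
          = cdot G (M *v G) - c * cnj (cdot u (M *v G)) - cnj c * cdot u (M *v G)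
            + cnj c * c * of_real \<alpha>"
    by (simp add: matrix_vector_mult_diff_distrib vector_scalar_commute cdot_diff_left
        cdot_diff_right cdot_smult_left cdot_smult_right u algebra_simps
        cdot_hermitian_commute[OF herm, of u G])
  also have "\<dots> = cdot G (M *v G) - cdot u (M *v G) * cnj (cdot u (M *v G)) / of_real \<alpha>"
    using \<open>\<alpha> \<noteq> 0\<close> by (simp add: c_def field_simps)
  finally show ?thesis .
qed


lemma herm_posdef_cdot_eq_0:
  assumes "herm_posdef V" and "cdot x (V *v x) = 0" shows "x = 0"
  using assms by (auto simp: herm_posdef_def)

lemma herm_posdef_invertible:
  fixes V :: "complex^'n^'n"
  assumes "herm_posdef V" shows "invertible V"
proof -
  have "inj ((*v) V)"
  proof (rule injI)
    fix x y assume "V *v x = V *v y"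
    then have "cdot (x - y) (V *v (x - y)) = 0"
      by (simp add: matrix_vector_mult_diff_distrib)
    then show "x = y" using herm_posdef_cdot_eq_0[OF assms, of "x - y"] by simp
  qed
  then show ?thesis
    using matrix_left_invertible_injective invertible_left_inverse by blast
qed


definition gram :: "complex^'l^'m \<Rightarrow> complex^'m^'m \<Rightarrow> complex^'l^'l" where
  "gram L V = ctrans L ** V ** L"

definition minus_rank_one :: "complex^'m^'m \<Rightarrow> complex^'m \<Rightarrow> complex \<Rightarrow> complex^'m^'m" where
  "minus_rank_one V v c = (\<chi> i j. V $ i $ j - v $ i * cnj (v $ j) / c)"

lemma minus_rank_one_mult:
  "minus_rank_one V v c *v E = V *v E - (cdot v E / c) *s v"
  by (simp add: minus_rank_one_def vec_eq_iff matrix_vector_mult_def cdot_def sum_subtractf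
      left_diff_distrib right_diff_distrib sum_distrib_left sum_divide_distrib mult_ac)

lemma gram_mult: "gram L V *v y = ctrans L *v (V *v (L *v y))"
  by (simp add: gram_def matrix_vector_mul_assoc matrix_mul_assoc)

lemma cdot_gram: "cdot x (gram L V *v y) = cdot (L *v x) (V *v (L *v y))"
  by (simp add: gram_mult cdot_matrix_vector_mult)

lemma gram_hermitian: "ctrans V = V \<Longrightarrow> ctrans (gram L V) = gram L V"
  by (simp add: gram_def ctrans_matrix_mult matrix_mul_assoc)

lemma gram_cdot_eq_0:
  assumes "herm_posdef V" "invertible (gram L V)" "cdot w (gram L V *v w) = 0"
  shows "w = 0"
proof -
  have "L *v w = 0"
    using assms(1,3) herm_posdef_cdot_eq_0 by (simp add: cdot_gram)
  then have "gram L V *v w = 0"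
    by (simp add: gram_mult)
  then show ?thesis
    using matrix_inv_matrix_vector_mult[OF assms(2), of w] by simp
qed

lemma ctrans_mult_Del:
  assumes "invertible (gram L V)" shows "ctrans L ** Del L V = 0"
proof (rule matrix_eq[THEN iffD2], rule allI)
  fix x
  have "(ctrans L ** Del L V) *v x
          = ctrans L *v (V *v x) - gram L V *v (matrix_inv (gram L V) *v (ctrans L *v (V *v x)))"
    by (simp add: Del_def Gam_def gram_def matrix_vector_mult_diff_rdistrib
        matrix_vector_mult_diff_distrib flip: matrix_vector_mul_assoc)
  also have "\<dots> = 0"
    by (simp add: matrix_vector_mult_matrix_inv[OF assms])
  finally show "(ctrans L ** Del L V) *v x = 0 *v x" by simp
qed


locale Gam_level =
  fixes L :: "complex^'l^'m" and V :: "complex^'m^'m" and v :: "complex^'m" and \<alpha> :: real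
  assumes posdef: "herm_posdef V"
    and gram_invertible: "invertible (gram L V)"
    and level: "cdot v (Gam L V *v v) = of_real \<alpha>"
    and level_nonzero: "\<alpha> \<noteq> 0"
begin

definition Gam_coeff :: "complex^'l" where
  "Gam_coeff = matrix_inv (gram L V) *v (ctrans L *v v)"

abbreviation S :: "complex^'m^'m" where
  "S \<equiv> minus_rank_one V v (of_real \<alpha>)"

lemma V_hermitian: "ctrans V = V"
  using posdef by (simp add: herm_posdef_def)

lemma Gam_mult_eq: "Gam L V *v v = L *v Gam_coeff"
  by (simp add: Gam_def Gam_coeff_def gram_def matrix_vector_mul_assoc matrix_mul_assoc)

lemma cdot_Gam_coeff_gram: "cdot Gam_coeff (gram L V *v G) = cdot v (L *v G)"
proof -
  have "gram L V *v Gam_coeff = ctrans L *v v"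
    by (simp add: Gam_coeff_def matrix_vector_mult_matrix_inv[OF gram_invertible])
  then show ?thesis
    by (metis cdot_matrix_vector_mult gram_hermitian[OF V_hermitian])
qed

lemma cdot_Gam_coeff_gram_self: "cdot Gam_coeff (gram L V *v Gam_coeff) = of_real \<alpha>"
  using level by (simp add: cdot_Gam_coeff_gram Gam_mult_eq)

lemma form_L_mult:
  "cdot (L *v G) (S *v (L *v G))
     = cdot G (gram L V *v G)
       - cdot Gam_coeff (gram L V *v G) * cnj (cdot Gam_coeff (gram L V *v G)) / of_real \<alpha>"
  unfolding cdot_Gam_coeff_gram
  by (simp add: minus_rank_one_mult cdot_diff_right cdot_smult_right cdot_gram
      cdot_commute[of "L *v G" v])

lemma form_zero_set:
  "{G. cdot (L *v G) (S *v (L *v G)) = 0} = {a *s Gam_coeff | a. True}"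
proof (intro set_eqI iffI)
  fix G assume "G \<in> {G. cdot (L *v G) (S *v (L *v G)) = 0}"
  define c where "c = cdot Gam_coeff (gram L V *v G) / of_real \<alpha>"
  have "cdot (G - c *s Gam_coeff) (gram L V *v (G - c *s Gam_coeff)) = 0"
    using \<open>G \<in> _\<close> unfolding c_def hermitian_completing_square[OF gram_hermitian[OF V_hermitian]
        cdot_Gam_coeff_gram_self level_nonzero]
    by (simp add: form_L_mult)
  then have "G - c *s Gam_coeff = 0"
    by (rule gram_cdot_eq_0[OF posdef gram_invertible])
  then show "G \<in> {a *s Gam_coeff | a. True}"
    by (intro CollectI exI[of _ c]) simp
next
  fix G assume "G \<in> {a *s Gam_coeff | a. True}"
  then obtain a where "G = a *s Gam_coeff" by auto
  then show "G \<in> {G. cdot (L *v G) (S *v (L *v G)) = 0}"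
    using level_nonzero
    by (simp add: form_L_mult vector_scalar_commute cdot_smult_left cdot_smult_right
        cdot_Gam_coeff_gram_self field_simps)
qed

lemma Del_mult_inverse: "Del L V *v (matrix_inv V *v v) = v - V *v (L *v Gam_coeff)"
  by (simp add: Del_def matrix_vector_mult_diff_rdistrib Gam_mult_eq[symmetric]
      matrix_vector_mult_matrix_inv[OF herm_posdef_invertible[OF posdef]]
      flip: matrix_vector_mul_assoc)

lemma S_mult_L_Gam_coeff: "S *v (L *v (a *s Gam_coeff)) = - (a *s (Del L V *v (matrix_inv V *v v)))"
proof -
  have "S *v (L *v Gam_coeff) = V *v (L *v Gam_coeff) - v"
    using level level_nonzero by (simp add: minus_rank_one_mult Gam_mult_eq)
  then show ?thesis
    by (simp add: vector_scalar_commute Del_mult_inverse)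
qed

lemma ctrans_mult_S_mult_L_Gam_coeff: "ctrans L *v (S *v (L *v (a *s Gam_coeff))) = 0"
proof -
  have "ctrans L *v (Del L V *v x) = 0" for x
    by (simp add: matrix_vector_mul_assoc ctrans_mult_Del[OF gram_invertible])
  then show ?thesis
    unfolding S_mult_L_Gam_coeff unfolding vec.neg vec.scale by simp
qed

end

theorem mainTheorem4:
  fixes A0 :: "'m::finite \<Rightarrow> 'l::finite \<Rightarrow> complex"
    and Ah :: "'m \<Rightarrow> 'l \<Rightarrow> nat \<Rightarrow> ('d::finite) list \<Rightarrow> complex"
    and t :: nat
    and V :: "complex^'m^'m"
    and v :: "complex^'m"
    and \<alpha> :: real
    and k :: "real^'d"
  assumes t: "t \<ge> 1"
    and V: "herm_posdef V"
    and nonsing: "\<forall>k'::real^'d. k' \<noteq> 0 \<longrightarrow>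
          invertible (ctrans (symbol A0 Ah t k') ** V ** symbol A0 Ah t k')"
    and bdd: "bdd_above {Re (cdot v (Gam (symbol A0 Ah t k') V *v v)) | k'::real^'d. k' \<noteq> 0}"
    and alpha: "\<alpha> = Sup {Re (cdot v (Gam (symbol A0 Ah t k') V *v v)) | k'::real^'d. k' \<noteq> 0}"
    and alpha_pos: "\<alpha> > 0"
    and k: "k \<noteq> 0"
    and kmax: "cdot v (Gam (symbol A0 Ah t k) V *v v) = complex_of_real \<alpha>"
  shows "let L = symbol A0 Ah t k;
             S = (\<chi> i j. V $ i $ j - v $ i * cnj (v $ j) / complex_of_real \<alpha>);
             f = (\<lambda>E. cdot E (S *v E));
             M = ctrans L ** V ** L
         in {G. f (L *v G) = 0} = {a *s (matrix_inv M *v (ctrans L *v v)) | a. True}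
          \<and> (\<forall>a. let H = L *v (a *s (matrix_inv M *v (ctrans L *v v))) in
                 H = a *s (Gam L V *v v)
               \<and> S *v H = - (a *s (Del L V *v (matrix_inv V *v v)))
               \<and> ctrans L *v (S *v H) = 0)
          \<and> ctrans L ** Del L V = 0"
proof -
  interpret Gam_level "symbol A0 Ah t k" V v \<alpha>
    using V nonsing k kmax alpha_pos by unfold_locales (auto simp: gram_def)
  show ?thesis
    unfolding Let_def gram_def[symmetric] minus_rank_one_def[symmetric] Gam_coeff_def[symmetric]
    using form_zero_set S_mult_L_Gam_coeff ctrans_mult_S_mult_L_Gam_coeff
      ctrans_mult_Del[OF gram_invertible]
    by (simp add: Gam_mult_eq vector_scalar_commute)
qed

end
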